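(* Let $h$ be an integer with $1\le h\le u$. Then $\beta$ is a root of $S(X)$ of multiplicity at least $2^h$ if and only if, for every $i\in\{0,1,\dots,2^h-1\}$, \[ \sum_{j=0}^{2^h-1}\zeta_{2^h}^{-ij}\,\eta_{j/2^h}(-1)\,K\big(\eta_{j/2^h}\chi\big)\equiv -2^h\delta_i \pmod{2^{h+1}\mathcal{P}\,\mathbb{Z}[\zeta_{2^hk}]}, \] where $\delta_i=1$ if $T/2\equiv i\pmod{2^h}$ and $\delta_i=0$ otherwise. Equivalently, $C\,v\equiv-2^h(\delta_0,\dots,\delta_{2^h-1})^{\top}$ componentwise, where $C=(\zeta_{2^h}^{-ij})_{0\le i,j\le 2^h-1}$ and $v=\big(\eta_{j/2^h}(-1)K(\eta_{j/2^h}\chi)\big)_{0\le j\le 2^h-1}$.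
   Context: Let $p$ be an odd prime, $m\ge1$, $q=p^m$, $\alpha$ a primitive element of $\mathbb{F}_q$, and $T=q-1$; write $T=2^uT'$ with $u\ge1$ and $T'$ odd. The binary SLCE sequence $(s_n)_{n\ge0}$ is defined as follows: $s_n=1$ if $\alpha^n+1$ is a nonzero non-square of $\mathbb{F}_q$, and $s_n=0$ otherwise. Put $S(X)=\sum_{n=0}^{T-1}s_nX^n\in\mathbb{F}_2[X]$. Multiplicities of roots are taken in $\overline{\mathbb{F}_2}[X]$. Let $\beta$ be an element of an algebraic closure of $\mathbb{F}_2$ with $\beta^T=1$ and multiplicative order $k>1$ (so $k$ is odd). Let $f$ be the order of $2$ modulo $k$, and write $\zeta_N=e^{2\pi i/N}$. Let $\mathcal{P}$ be a prime ideal of $\mathbb{Z}[\zeta_k]$ containing $2$. Fix a field isomorphism $\phi:\mathbb{F}_2(\beta)=\mathbb{F}_{2^f}\to\mathbb{Z}[\zeta_k]/\mathcal{P}$, and let $\zeta$ be the unique complex $k$-th root of unity with $\phi(\beta)=\zeta+\mathcal{P}$. Multiplicative characters of $\mathbb{F}_q$ are homomorphisms $\mathbb{F}_q^*\to\mathbb{C}^*$, extended by value $0$ at $0$. For a rational $j$ with $(q-1)j\in\mathbb{Z}$, $\eta_j$ is the character with $\eta_j(\alpha)=e^{2\pi ij}$. Let $\rho=\eta_{1/2}$ be the quadratic character. Let $\chi$ be the character with $\chi(\alpha^n)=\zeta^n$. For a character $\psi$, set $K(\psi)=\sum_{x\in\mathbb{F}_q}\rho(x)\psi(1-x)$. For an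 ideal $I$ of $\mathbb{Z}[\zeta_k]$, $I\,\mathbb{Z}[\zeta_{2^hk}]$ is the ideal it generates in $\mathbb{Z}[\zeta_{2^hk}]$. *)

theory Defs
  imports "HOL-Analysis.Analysis" "HOL-Computational_Algebra.Polynomial"
begin

definition zeta :: "nat \<Rightarrow> complex" where
  "zeta N = cis (2 * pi / real N)"

definition Zring :: "nat \<Rightarrow> complex set" where
  "Zring N = {poly (map_poly of_int f) (zeta N) | f :: int poly. True}"

definition gen_ideal :: "complex set \<Rightarrow> complex set \<Rightarrow> complex set" where
  "gen_ideal R A = {(\<Sum>i<n. r i * a i) | (n::nat) r a. \<forall>i<n. r i \<in> R \<and> a i \<in> A}"

definition prime_ideal_Zring :: "nat \<Rightarrow> complex set \<Rightarrow> bool" where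
  "prime_ideal_Zring N P \<longleftrightarrow>
     P \<subseteq> Zring N \<and> 0 \<in> P \<and>
     (\<forall>x\<in>P. \<forall>y\<in>P. x + y \<in> P) \<and>
     (\<forall>r\<in>Zring N. \<forall>x\<in>P. r * x \<in> P) \<and>
     1 \<notin> P \<and>
     (\<forall>a\<in>Zring N. \<forall>b\<in>Zring N. a * b \<in> P \<longrightarrow> a \<in> P \<or> b \<in> P)"

definition dlog :: "'a::field \<Rightarrow> 'a \<Rightarrow> nat" where
  "dlog \<alpha> x = (LEAST n. \<alpha> ^ n = x)"

definition eta :: "'a::field \<Rightarrow> nat \<Rightarrow> nat \<Rightarrow> 'a \<Rightarrow> complex" where
  "eta \<alpha> N j x = (if x = 0 then 0 else cis (2 * pi * real j * real (dlog \<alpha> x) / real N))"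

definition rho :: "'a::field \<Rightarrow> 'a \<Rightarrow> complex" where
  "rho \<alpha> = eta \<alpha> 2 1"

definition chi :: "'a::field \<Rightarrow> complex \<Rightarrow> 'a \<Rightarrow> complex" where
  "chi \<alpha> z x = (if x = 0 then 0 else z ^ dlog \<alpha> x)"

definition Ksum :: "'a::{finite,field} \<Rightarrow> ('a \<Rightarrow> complex) \<Rightarrow> complex" where
  "Ksum \<alpha> \<psi> = (\<Sum>x\<in>UNIV. rho \<alpha> x * \<psi> (1 - x))"

definition nonsquare :: "'a::field \<Rightarrow> bool" where
  "nonsquare x \<longleftrightarrow> x \<noteq> 0 \<and> \<not> (\<exists>y. y ^ 2 = x)"

definition slce :: "'a::field \<Rightarrow> nat \<Rightarrow> bool" where
  "slce \<alpha> n \<longleftrightarrow> nonsquare (\<alpha> ^ n + 1)"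

text \<open>The polynomial S(X) = sum_{n<T} s_n X^n, with F_2 coefficients 0/1 read in
  a field 'b of characteristic 2.\<close>
definition Spoly :: "'a::field \<Rightarrow> nat \<Rightarrow> 'b::field poly" where
  "Spoly \<alpha> T = (\<Sum>n<T. if slce \<alpha> n then monom 1 n else 0)"

end

theory Submission
  imports Defs "Jordan_Normal_Form.Determinant"
begin

text \<open>
  In characteristic two \<open>(X - \<beta>)^(2^h) = X^(2^h) - \<beta>^(2^h)\<close>, so \<open>\<beta>\<close> is a root of \<open>S\<close> of
  multiplicity at least \<open>2^h\<close> iff \<open>S\<close> vanishes modulo \<open>X^(2^h) - \<beta>^(2^h)\<close>, i.e. iff for every
  residue \<open>i\<close> modulo \<open>2^h\<close> the sum of the \<open>\<beta>^n\<close> over \<open>n \<equiv> i\<close> with \<open>s\<^sub>n = 1\<close> vanishes.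
  Lifting \<open>\<beta>\<close> to \<open>\<zeta>\<close> along \<open>\<int>[\<zeta>\<^sub>k] \<rightarrow> \<int>[\<zeta>\<^sub>k]/\<P>\<close>, this says that the corresponding sums \<open>A\<^sub>i\<close>
  of powers of \<open>\<zeta>\<close> lie in \<open>\<P>\<close>.

  On the other side, substituting \<open>x = 1 + \<alpha>^n\<close> turns \<open>\<eta>\<^sub>j\<^sub>/\<^sub>2\<^sub>^\<^sub>h(-1) K(\<eta>\<^sub>j\<^sub>/\<^sub>2\<^sub>^\<^sub>h \<chi>)\<close> into
  \<open>\<Sum>\<^sub>n \<rho>(1 + \<alpha>^n) \<zeta>\<^sub>2\<^sub>^\<^sub>h^(jn) \<zeta>^n\<close>, and \<open>\<rho>(1 + \<alpha>^n) = 1 - 2 s\<^sub>n\<close> except at \<open>n = T/2\<close>. Inverting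
  the discrete Fourier transform in \<open>j\<close> shows that the \<open>i\<close>-th entry of \<open>C v + 2^h \<delta>\<close> equals
  \<open>-2^(h+1) A\<^sub>i\<close>. Finally \<open>\<P> \<int>[\<zeta>\<^sub>2\<^sub>^\<^sub>h\<^sub>k] \<inter> \<int>[\<zeta>\<^sub>k] = \<P>\<close> (by the determinant trick), so this entry lies
  in \<open>2^(h+1) \<P> \<int>[\<zeta>\<^sub>2\<^sub>^\<^sub>h\<^sub>k]\<close> iff \<open>A\<^sub>i \<in> \<P>\<close>.
\<close>

section \<open>Roots of unity and the ring \<open>\<int>[\<zeta>\<^sub>N]\<close>\<close>

lemma power_mod_eq_of_power_eq_one:
  fixes w :: "'a::monoid_mult"
  assumes "w ^ n = 1"
  shows "w ^ (a mod n) = w ^ a"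
proof -
  have "w ^ a = (w ^ n) ^ (a div n) * w ^ (a mod n)"
    by (metis div_mult_mod_eq power_add power_mult mult.commute)
  with assms show ?thesis by simp
qed

lemma sum_powers_root_of_unity:
  fixes w :: "'a::field"
  assumes "w ^ n = 1"
  shows "(\<Sum>j<n. w ^ j) = (if w = 1 then of_nat n else 0)"
  using assms by (auto simp: geometric_sum)

lemma zeta_power: "zeta N ^ n = cis (2 * pi * real n / real N)"
proof -
  have "zeta N ^ n = cis (real n * (2 * pi / real N))"
    unfolding zeta_def by (rule Complex.DeMoivre)
  then show ?thesis
    by (simp add: mult.commute)
qed

lemma zeta_power_self: "N > 0 \<Longrightarrow> zeta N ^ N = 1"
  by (simp add: zeta_power)

lemma zeta_power_mod: "N > 0 \<Longrightarrow> zeta N ^ (n mod N) = zeta N ^ n"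
  by (rule power_mod_eq_of_power_eq_one[OF zeta_power_self])

lemma zeta_power_eq_iff:
  assumes "N > 0"
  shows "zeta N ^ a = zeta N ^ b \<longleftrightarrow> a mod N = b mod N"
proof
  have inj: "inj_on (\<lambda>k. cis (2 * pi * real k / real N)) {..<N}"
    using Complex.bij_betw_roots_unity[OF assms] by (simp add: bij_betw_def)
  assume "zeta N ^ a = zeta N ^ b"
  then have "zeta N ^ (a mod N) = zeta N ^ (b mod N)"
    by (simp add: zeta_power_mod[OF assms])
  then show "a mod N = b mod N"
    using inj_onD[OF inj] assms by (simp add: zeta_power)
qed (metis zeta_power_mod[OF assms])

lemma zeta_two: "zeta 2 = -1"
  by (simp add: zeta_def complex_eq_iff)

lemma root_of_unity_eq_zeta_power:
  assumes "N > 0" "z ^ N = 1"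
  obtains a where "z = zeta N ^ a"
proof -
  have "z \<in> (\<lambda>a. cis (2 * pi * real a / real N)) ` {..<N}"
    using Complex.bij_betw_roots_unity[OF assms(1)] assms(2) by (auto simp: bij_betw_def)
  then show ?thesis
    using that by (auto simp: zeta_power)
qed

lemma zeta_orthogonality:
  assumes "N > 0" "i < N"
  shows "(\<Sum>j<N. (inverse (zeta N) ^ i * zeta N ^ n) ^ j) = (if n mod N = i then of_nat N else 0)"
proof -
  have "zeta N \<noteq> 0"
    using zeta_power_self[OF assms(1)] by (metis assms(1) power_0_left zero_neq_one gr_implies_not0)
  then have "inverse (zeta N) ^ i * zeta N ^ n = 1 \<longleftrightarrow> zeta N ^ n = zeta N ^ i"
    by (auto simp: power_inverse field_simps)
  also have "\<dots> \<longleftrightarrow> n mod N = i"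
    using zeta_power_eq_iff[OF assms(1)] assms(2) by simp
  finally show ?thesis
    using sum_powers_root_of_unity[of "inverse (zeta N) ^ i * zeta N ^ n" N]
    by (simp add: power_mult_distrib power_mult[symmetric] mult.commute[of _ N] power_inverse
      zeta_power_self[OF assms(1)]) (simp add: power_mult zeta_power_self[OF assms(1)])
qed

lemma power_order_dvd:
  fixes \<beta> :: "'a::monoid_mult"
  assumes "k > 0" "\<beta> ^ k = 1" "\<forall>j. 0 < j \<and> j < k \<longrightarrow> \<beta> ^ j \<noteq> 1" "\<beta> ^ T = 1"
  shows "k dvd T"
proof -
  have "\<beta> ^ (T mod k) = 1"
    using power_mod_eq_of_power_eq_one[OF assms(2)] assms(4) by simp
  then show ?thesis
    using assms(3) mod_less_divisor[OF assms(1)] by (auto simp: dvd_eq_mod_eq_0)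
qed

lemma power_eq_one_coprime:
  fixes z :: "'a::comm_monoid_mult"
  assumes "z ^ N = 1" "z ^ k = 1" "coprime N k" "N > 0"
  shows "z = 1"
proof -
  obtain x y where "N * x = k * y + 1"
    using bezout_nat[of N k] assms(3,4) by auto
  then have "z ^ (N * x) = z * z ^ (k * y)"
    by simp
  then show ?thesis
    using assms(1,2) by (simp add: power_mult)
qed

lemma zeta_power_times_odd_root_ne_one:
  assumes "z ^ k = 1" "odd k" "z \<noteq> 1"
  shows "zeta (2 ^ h) ^ j * z \<noteq> 1"
proof
  assume "zeta (2 ^ h) ^ j * z = 1"
  then have "(zeta (2 ^ h) ^ (2 ^ h)) ^ j * z ^ (2 ^ h) = 1"
    by (metis power_mult_distrib power_one power_mult mult.commute)
  then have "z ^ (2 ^ h) = 1"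
    by (simp add: zeta_power_self)
  then have "z = 1"
    using power_eq_one_coprime[of z "2 ^ h" k] assms(1,2) by simp
  with assms(3) show False ..
qed

lemma Zring_imp_int_combination:
  assumes N: "N > 0" and x: "x \<in> Zring N"
  obtains c :: "nat \<Rightarrow> int" where "x = (\<Sum>m<N. of_int (c m) * zeta N ^ m)"
proof -
  obtain f :: "int poly" where xf: "x = poly (map_poly of_int f) (zeta N)"
    using x unfolding Zring_def by auto
  have "degree (map_poly (of_int :: int \<Rightarrow> complex) f) = degree f"
    by (rule degree_map_poly) simp
  then have "x = (\<Sum>i\<le>degree f. of_int (coeff f i) * zeta N ^ (i mod N))"
    unfolding xf poly_altdef by (simp add: coeff_map_poly zeta_power_mod[OF N])
  also have "\<dots> = (\<Sum>m<N. \<Sum>i | i \<in> {..degree f} \<and> i mod N = m. of_int (coeff f i) * zeta N ^ (i mod N))"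
    by (rule sum.group[symmetric]) (use N in auto)
  also have "\<dots> = (\<Sum>m<N. of_int (\<Sum>i | i \<in> {..degree f} \<and> i mod N = m. coeff f i) * zeta N ^ m)"
    by (auto simp: sum_distrib_right intro!: sum.cong)
  finally show ?thesis by (rule that)
qed

lemma int_combination_in_Zring:
  "(\<Sum>m<N. of_int (c m) * zeta N ^ m) \<in> Zring N"
proof -
  define p :: "complex poly" where "p = map_poly of_int (Poly (map c [0..<N]))"
  have coeff_p: "coeff p i = (if i < N then of_int (c i) else 0)" for i
    by (simp add: p_def coeff_map_poly nth_default_def)
  have "degree p \<le> N"
    by (rule degree_le) (simp add: coeff_p)
  then have "poly p (zeta N) = (\<Sum>i\<le>N. coeff p i * zeta N ^ i)"
    by (subst poly_as_sum_of_monoms'[symmetric]) (simp_all add: poly_sum poly_monom)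
  also have "\<dots> = (\<Sum>m<N. of_int (c m) * zeta N ^ m)"
    by (simp add: coeff_p lessThan_Suc_atMost[symmetric] if_distrib cong: if_cong)
  finally show ?thesis
    unfolding Zring_def p_def by (auto intro!: exI[of _ "Poly (map c [0..<N])"])
qed

lemma finite_int_combination_in_Zring:
  assumes "N > 0" "finite A"
  shows "(\<Sum>i\<in>A. of_int (c i) * zeta N ^ e i) \<in> Zring N"
proof -
  have "(\<Sum>i\<in>A. of_int (c i) * zeta N ^ e i) = (\<Sum>i\<in>A. of_int (c i) * zeta N ^ (e i mod N))"
    by (simp add: zeta_power_mod[OF assms(1)])
  also have "\<dots> = (\<Sum>m<N. \<Sum>i | i \<in> A \<and> e i mod N = m. of_int (c i) * zeta N ^ (e i mod N))"
    by (rule sum.group[symmetric]) (use assms in auto)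
  also have "\<dots> = (\<Sum>m<N. of_int (\<Sum>i | i \<in> A \<and> e i mod N = m. c i) * zeta N ^ m)"
    by (auto simp: sum_distrib_right intro!: sum.cong)
  finally show ?thesis
    by (simp only: int_combination_in_Zring)
qed

lemma Zring_of_int: "N > 0 \<Longrightarrow> of_int c \<in> Zring N"
  using finite_int_combination_in_Zring[of N "{0}" "\<lambda>_. c" "\<lambda>_. 0"] by simp

lemma Zring_0: "N > 0 \<Longrightarrow> 0 \<in> Zring N"
  using Zring_of_int[of N 0] by simp

lemma Zring_1: "N > 0 \<Longrightarrow> 1 \<in> Zring N"
  using Zring_of_int[of N 1] by simp

lemma Zring_zeta_power: "N > 0 \<Longrightarrow> zeta N ^ a \<in> Zring N"
  using finite_int_combination_in_Zring[of N "{0}" "\<lambda>_. 1" "\<lambda>_. a"] by simp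

lemma Zring_add:
  assumes "N > 0" "x \<in> Zring N" "y \<in> Zring N"
  shows "x + y \<in> Zring N"
proof -
  obtain c d where "x = (\<Sum>m<N. of_int (c m) * zeta N ^ m)" "y = (\<Sum>m<N. of_int (d m) * zeta N ^ m)"
    using Zring_imp_int_combination assms by metis
  then have "x + y = (\<Sum>m<N. of_int (c m + d m) * zeta N ^ m)"
    by (simp add: sum.distrib[symmetric] distrib_right)
  then show ?thesis
    by (simp only: int_combination_in_Zring)
qed

lemma Zring_mult:
  assumes "N > 0" "x \<in> Zring N" "y \<in> Zring N"
  shows "x * y \<in> Zring N"
proof -
  obtain c d where "x = (\<Sum>m<N. of_int (c m) * zeta N ^ m)" "y = (\<Sum>m<N. of_int (d m) * zeta N ^ m)"
    using Zring_imp_int_combination assms by metis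
  then have "x * y = (\<Sum>(l, m)\<in>{..<N} \<times> {..<N}. of_int (c l * d m) * zeta N ^ (l + m))"
    by (simp add: sum_product sum.cartesian_product power_add mult_ac)
  also have "\<dots> = (\<Sum>p\<in>{..<N} \<times> {..<N}. of_int (c (fst p) * d (snd p)) * zeta N ^ (fst p + snd p))"
    by (simp add: case_prod_beta)
  also have "\<dots> \<in> Zring N"
    by (rule finite_int_combination_in_Zring) (simp_all add: assms(1))
  finally show ?thesis .
qed

lemma Zring_uminus: "N > 0 \<Longrightarrow> x \<in> Zring N \<Longrightarrow> - x \<in> Zring N"
  using Zring_mult[of N "-1" x] Zring_of_int[of N "-1"] by simp

lemma Zring_diff: "N > 0 \<Longrightarrow> x \<in> Zring N \<Longrightarrow> y \<in> Zring N \<Longrightarrow> x - y \<in> Zring N"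
  using Zring_add[of N x "-y"] Zring_uminus[of N y] by simp

lemma Zring_sum: "N > 0 \<Longrightarrow> (\<And>i. i \<in> A \<Longrightarrow> f i \<in> Zring N) \<Longrightarrow> sum f A \<in> Zring N"
  by (induction A rule: infinite_finite_induct) (auto intro: Zring_add Zring_0)

lemma Zring_prod: "N > 0 \<Longrightarrow> (\<And>i. i \<in> A \<Longrightarrow> f i \<in> Zring N) \<Longrightarrow> prod f A \<in> Zring N"
  by (induction A rule: infinite_finite_induct) (auto intro: Zring_mult Zring_1)

lemma Zring_power: "N > 0 \<Longrightarrow> x \<in> Zring N \<Longrightarrow> x ^ n \<in> Zring N"
  using Zring_prod[of N "{..<n}" "\<lambda>_. x"] by simp

lemma root_of_unity_in_Zring: "N > 0 \<Longrightarrow> z ^ N = 1 \<Longrightarrow> z \<in> Zring N"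
  by (metis root_of_unity_eq_zeta_power Zring_zeta_power)

section \<open>Ideals of \<open>\<int>[\<zeta>\<^sub>k]\<close> and their extensions\<close>

lemma gen_ideal_iff:
  "x \<in> gen_ideal R A \<longleftrightarrow>
    (\<exists>(n::nat) r a. x = (\<Sum>i<n. r i * a i) \<and> (\<forall>i<n. r i \<in> R \<and> a i \<in> A))"
  unfolding gen_ideal_def by (simp only: mem_Collect_eq)

lemma gen_ideal_scaled_iff:
  assumes "c \<noteq> 0"
  shows "c * y \<in> gen_ideal R ((\<lambda>x. c * x) ` A) \<longleftrightarrow> y \<in> gen_ideal R A"
proof
  assume "c * y \<in> gen_ideal R ((\<lambda>x. c * x) ` A)"
  then obtain n :: nat and r a :: "nat \<Rightarrow> complex" where y: "c * y = (\<Sum>i<n. r i * a i)"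
    and ra: "\<forall>i<n. r i \<in> R \<and> a i \<in> (\<lambda>x. c * x) ` A"
    unfolding gen_ideal_iff by (elim exE conjE) (rule that)
  then have "\<forall>i. \<exists>b. i < n \<longrightarrow> b \<in> A \<and> a i = c * b"
    by blast
  then obtain b where b: "\<forall>i<n. b i \<in> A \<and> a i = c * b i"
    by metis
  then have "c * y = c * (\<Sum>i<n. r i * b i)"
    by (simp add: y sum_distrib_left mult_ac)
  then have "y = (\<Sum>i<n. r i * b i)"
    using assms by simp
  moreover have "\<forall>i<n. r i \<in> R \<and> b i \<in> A"
    using ra b by blast
  ultimately show "y \<in> gen_ideal R A"
    unfolding gen_ideal_iff by blast
next
  assume "y \<in> gen_ideal R A"
  then obtain n :: nat and r a :: "nat \<Rightarrow> complex"
    where "y = (\<Sum>i<n. r i * a i)" "\<forall>i<n. r i \<in> R \<and> a i \<in> A"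
    unfolding gen_ideal_iff by (elim exE conjE) (rule that)
  then have witness: "c * y = (\<Sum>i<n. r i * (c * a i)) \<and> (\<forall>i<n. r i \<in> R \<and> c * a i \<in> (\<lambda>x. c * x) ` A)"
    by (auto simp: sum_distrib_left mult_ac)
  show "c * y \<in> gen_ideal R ((\<lambda>x. c * x) ` A)"
    unfolding gen_ideal_iff
    by (rule exI[of _ n], rule exI[of _ r], rule exI[of _ "\<lambda>i. c * a i"], rule witness)
qed

context
  fixes k :: nat and P :: "complex set"
  assumes k_pos: "k > 0" and prime: "prime_ideal_Zring k P"
begin

lemma prime_ideal_Zring_subset: "x \<in> P \<Longrightarrow> x \<in> Zring k"
  using prime unfolding prime_ideal_Zring_def by auto

lemma prime_ideal_Zring_0: "0 \<in> P"
  using prime unfolding prime_ideal_Zring_def by auto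

lemma prime_ideal_Zring_add: "x \<in> P \<Longrightarrow> y \<in> P \<Longrightarrow> x + y \<in> P"
  using prime unfolding prime_ideal_Zring_def by auto

lemma prime_ideal_Zring_mult_left: "r \<in> Zring k \<Longrightarrow> x \<in> P \<Longrightarrow> r * x \<in> P"
  using prime unfolding prime_ideal_Zring_def by auto

lemma prime_ideal_Zring_mult_right: "r \<in> Zring k \<Longrightarrow> x \<in> P \<Longrightarrow> x * r \<in> P"
  using prime_ideal_Zring_mult_left[of r x] by (simp add: mult.commute)

lemma prime_ideal_Zring_uminus: "x \<in> P \<Longrightarrow> - x \<in> P"
  using prime_ideal_Zring_mult_left[of "-1" x] Zring_of_int[OF k_pos, of "-1"] by simp

lemma prime_ideal_Zring_diff: "x \<in> P \<Longrightarrow> y \<in> P \<Longrightarrow> x - y \<in> P"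
  using prime_ideal_Zring_add[of x "- y"] prime_ideal_Zring_uminus[of y] by simp

lemma prime_ideal_Zring_uminus_iff: "- x \<in> P \<longleftrightarrow> x \<in> P"
  using prime_ideal_Zring_uminus[of x] prime_ideal_Zring_uminus[of "- x"] by auto

lemma prime_ideal_Zring_sum: "(\<And>i. i \<in> A \<Longrightarrow> f i \<in> P) \<Longrightarrow> sum f A \<in> P"
  by (induction A rule: infinite_finite_induct)
    (auto intro: prime_ideal_Zring_add prime_ideal_Zring_0)

lemma prime_ideal_Zring_prod:
  assumes "finite A" "a \<in> A" "f a \<in> P" "\<And>i. i \<in> A \<Longrightarrow> f i \<in> Zring k"
  shows "prod f A \<in> P"
proof -
  have "prod f A = f a * prod f (A - {a})"
    using assms by (simp add: prod.remove)
  also have "\<dots> \<in> P"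
    using assms by (intro prime_ideal_Zring_mult_right Zring_prod[OF k_pos]) auto
  finally show ?thesis .
qed

lemma prime_ideal_Zring_power_imp: "x \<in> Zring k \<Longrightarrow> x ^ n \<in> P \<Longrightarrow> x \<in> P"
proof (induction n)
  case 0
  then show ?case
    using prime unfolding prime_ideal_Zring_def by auto
next
  case (Suc n)
  then have "x \<in> P \<or> x ^ n \<in> P"
    using prime Zring_power[OF k_pos Suc.prems(1)] unfolding prime_ideal_Zring_def by auto
  then show ?case
    using Suc by blast
qed

lemma prod_diff_minus_power_in_prime_ideal:
  assumes "finite A" "y \<in> Zring k" "\<And>i. i \<in> A \<Longrightarrow> m i \<in> P"
  shows "(\<Prod>i\<in>A. y - m i) - y ^ card A \<in> P"
  using assms
proof (induction A rule: finite_induct)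
  case empty
  then show ?case
    by (simp add: prime_ideal_Zring_0)
next
  case (insert a A)
  have "(\<Prod>i\<in>insert a A. y - m i) - y ^ card (insert a A)
      = y * ((\<Prod>i\<in>A. y - m i) - y ^ card A) - m a * (\<Prod>i\<in>A. y - m i)"
    using insert by (simp add: algebra_simps)
  also have "\<dots> \<in> P"
  proof (rule prime_ideal_Zring_diff)
    show "y * ((\<Prod>i\<in>A. y - m i) - y ^ card A) \<in> P"
      using insert by (intro prime_ideal_Zring_mult_left) auto
    have "(\<Prod>i\<in>A. y - m i) \<in> Zring k"
      using insert by (intro Zring_prod[OF k_pos] Zring_diff[OF k_pos]) (auto intro: prime_ideal_Zring_subset)
    then show "m a * (\<Prod>i\<in>A. y - m i) \<in> P"
      using insert by (intro prime_ideal_Zring_mult_right) auto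
  qed
  finally show ?case .
qed

text \<open>Every term of the Leibniz expansion of \<open>det (y I - M)\<close> other than the diagonal one
  contains an off-diagonal entry of \<open>M\<close>.\<close>
lemma det_scalar_minus_in_prime_ideal:
  fixes M :: "complex mat"
  assumes M: "M \<in> carrier_mat n n" and M_P: "\<And>i j. i < n \<Longrightarrow> j < n \<Longrightarrow> M $$ (i, j) \<in> P"
    and y: "y \<in> Zring k"
  shows "det (y \<cdot>\<^sub>m 1\<^sub>m n - M) - y ^ n \<in> P"
proof -
  define B where "B = y \<cdot>\<^sub>m 1\<^sub>m n - M"
  have B: "B \<in> carrier_mat n n"
    using M unfolding B_def by auto
  have B_entry: "B $$ (i, j) = (if i = j then y else 0) - M $$ (i, j)" if "i < n" "j < n" for i j
    using that M unfolding B_def by auto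
  have B_Zring: "B $$ (i, j) \<in> Zring k" if "i < n" "j < n" for i j
    using B_entry[OF that] prime_ideal_Zring_subset[OF M_P[OF that]] y
    by (auto intro: Zring_diff[OF k_pos] Zring_uminus[OF k_pos])
  define Perms where "Perms = {p. p permutes {0..<n}}"
  have "finite Perms" "id \<in> Perms"
    unfolding Perms_def by (simp_all add: finite_permutations permutes_id)
  then have det_B: "det B = (\<Prod>i = 0..<n. y - M $$ (i, i))
      + (\<Sum>p\<in>Perms - {id}. signof p * (\<Prod>i = 0..<n. B $$ (i, p i)))"
    by (simp add: det_def'[OF B] Perms_def[symmetric] sum.remove B_entry)
  have diagonal: "(\<Prod>i = 0..<n. y - M $$ (i, i)) - y ^ n \<in> P"
    using prod_diff_minus_power_in_prime_ideal[of "{0..<n}" y "\<lambda>i. M $$ (i, i)"] y M_P by simp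
  have off_diagonal: "signof p * (\<Prod>i = 0..<n. B $$ (i, p i)) \<in> P" if p: "p \<in> Perms - {id}" for p
  proof -
    have p_perm: "p permutes {0..<n}"
      using p unfolding Perms_def by auto
    then have p_less: "p i < n" if "i < n" for i
      using that by (simp add: permutes_in_image)
    obtain i0 where i0: "i0 < n" "p i0 \<noteq> i0"
      using p p_perm by (metis DiffE atLeastLessThan_iff eq_id_iff permutes_def singletonI)
    have "B $$ (i0, p i0) \<in> P"
      using B_entry[OF i0(1) p_less[OF i0(1)]] i0 M_P[OF i0(1) p_less[OF i0(1)]]
      by (simp add: prime_ideal_Zring_uminus)
    then have "(\<Prod>i = 0..<n. B $$ (i, p i)) \<in> P"
      using i0 p_less B_Zring by (intro prime_ideal_Zring_prod[of _ i0]) auto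
    then show ?thesis
      by (intro prime_ideal_Zring_mult_left Zring_of_int[OF k_pos])
  qed
  have "det B - y ^ n = ((\<Prod>i = 0..<n. y - M $$ (i, i)) - y ^ n)
      + (\<Sum>p\<in>Perms - {id}. signof p * (\<Prod>i = 0..<n. B $$ (i, p i)))"
    by (simp add: det_B)
  also have "\<dots> \<in> P"
    using diagonal off_diagonal by (intro prime_ideal_Zring_add prime_ideal_Zring_sum)
  finally have "det B - y ^ n \<in> P" .
  then show ?thesis
    unfolding B_def .
qed

lemma prime_ideal_Zring_eigenvalue:
  fixes M :: "complex mat"
  assumes M: "M \<in> carrier_mat n n" and M_P: "\<And>i j. i < n \<Longrightarrow> j < n \<Longrightarrow> M $$ (i, j) \<in> P"
    and y: "y \<in> Zring k" and g: "g \<in> carrier_vec n" "g \<noteq> 0\<^sub>v n"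
    and kernel: "(y \<cdot>\<^sub>m 1\<^sub>m n - M) *\<^sub>v g = 0\<^sub>v n"
  shows "y \<in> P"
proof -
  have "y \<cdot>\<^sub>m 1\<^sub>m n - M \<in> carrier_mat n n"
    using M by auto
  then have "det (y \<cdot>\<^sub>m 1\<^sub>m n - M) = 0"
    using det_0_iff_vec_prod_zero g kernel by blast
  then have "y ^ n \<in> P"
    using det_scalar_minus_in_prime_ideal[OF M M_P y] prime_ideal_Zring_uminus by fastforce
  then show ?thesis
    using prime_ideal_Zring_power_imp[OF y] by blast
qed

text \<open>Write \<open>y = \<Sum>j r\<^sub>j a\<^sub>j\<close> with \<open>a\<^sub>j \<in> P\<close> and expand every \<open>r\<^sub>j \<zeta>\<^sub>L\<^sup>l\<close> in the
  powers \<open>\<zeta>\<^sub>L\<^sup>m\<close>; the coefficients of the expansions form the matrix.\<close>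
lemma gen_ideal_Zring_eigenmatrix:
  assumes L: "L > 0" and y: "y \<in> gen_ideal (Zring L) P"
  obtains M :: "complex mat" where "M \<in> carrier_mat L L" "\<And>l m. l < L \<Longrightarrow> m < L \<Longrightarrow> M $$ (l, m) \<in> P"
    and "(y \<cdot>\<^sub>m 1\<^sub>m L - M) *\<^sub>v vec L (\<lambda>l. zeta L ^ l) = 0\<^sub>v L"
proof -
  obtain n :: nat and r a :: "nat \<Rightarrow> complex" where y_eq: "y = (\<Sum>j<n. r j * a j)"
    and ra: "\<forall>j<n. r j \<in> Zring L \<and> a j \<in> P"
    using y unfolding gen_ideal_iff by (elim exE conjE) (rule that)
  have "\<exists>c. j < n \<longrightarrow> r j * zeta L ^ l = (\<Sum>m<L. of_int (c m) * zeta L ^ m)" for j l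
    using ra Zring_mult[OF L] Zring_zeta_power[OF L] Zring_imp_int_combination[OF L] by metis
  then obtain c where c: "\<And>j l. j < n \<Longrightarrow> r j * zeta L ^ l = (\<Sum>m<L. of_int (c j l m) * zeta L ^ m)"
    by metis
  define M :: "complex mat" where "M = mat L L (\<lambda>(l, m). \<Sum>j<n. of_int (c j l m) * a j)"
  have M: "M \<in> carrier_mat L L"
    unfolding M_def by simp
  moreover have "M $$ (l, m) \<in> P" if "l < L" "m < L" for l m
    using that ra unfolding M_def
    by (auto intro!: prime_ideal_Zring_sum prime_ideal_Zring_mult_left Zring_of_int[OF k_pos])
  moreover have "(y \<cdot>\<^sub>m 1\<^sub>m L - M) *\<^sub>v vec L (\<lambda>l. zeta L ^ l) = 0\<^sub>v L"
  proof (rule eq_vecI)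
    fix l
    assume "l < dim_vec (0\<^sub>v L)"
    then have l: "l < L" by simp
    have "((y \<cdot>\<^sub>m 1\<^sub>m L - M) *\<^sub>v vec L (\<lambda>l. zeta L ^ l)) $ l
        = (\<Sum>m<L. (if l = m then y else 0) * zeta L ^ m) - (\<Sum>m<L. M $$ (l, m) * zeta L ^ m)"
      using l M by (simp add: scalar_prod_def lessThan_atLeast0 sum_subtractf[symmetric] algebra_simps)
        (auto intro!: sum.cong)
    also have "(\<Sum>m<L. (if l = m then y else 0) * zeta L ^ m) = y * zeta L ^ l"
      using l by (simp add: if_distrib[of "\<lambda>x. x * _"] sum.delta cong: if_cong)
    also have "(\<Sum>m<L. M $$ (l, m) * zeta L ^ m) = (\<Sum>j<n. a j * (\<Sum>m<L. of_int (c j l m) * zeta L ^ m))"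
      using l by (simp add: M_def sum_distrib_left sum_distrib_right mult_ac) (rule sum.swap)
    also have "\<dots> = (\<Sum>j<n. a j * (r j * zeta L ^ l))"
      using c l by simp
    also have "\<dots> = y * zeta L ^ l"
      by (simp add: y_eq sum_distrib_left sum_distrib_right mult_ac)
    finally show "((y \<cdot>\<^sub>m 1\<^sub>m L - M) *\<^sub>v vec L (\<lambda>l. zeta L ^ l)) $ l = 0\<^sub>v L $ l"
      using l by simp
  qed (use M in simp)
  ultimately show ?thesis
    by (rule that)
qed

lemma gen_ideal_Zring_contract:
  assumes L: "L > 0" and y: "y \<in> Zring k" and y_ideal: "y \<in> gen_ideal (Zring L) P"
  shows "y \<in> P"
proof -
  obtain M where M: "M \<in> carrier_mat L L" "\<And>l m. l < L \<Longrightarrow> m < L \<Longrightarrow> M $$ (l, m) \<in> P"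
    and kernel: "(y \<cdot>\<^sub>m 1\<^sub>m L - M) *\<^sub>v vec L (\<lambda>l. zeta L ^ l) = 0\<^sub>v L"
    using gen_ideal_Zring_eigenmatrix[OF L y_ideal] by blast
  have "vec L (\<lambda>l. zeta L ^ l) \<noteq> 0\<^sub>v L"
  proof
    assume "vec L (\<lambda>l. zeta L ^ l) = 0\<^sub>v L"
    then have "vec L (\<lambda>l. zeta L ^ l) $ 0 = 0\<^sub>v L $ 0"
      by simp
    then show False
      using L by simp
  qed
  then show ?thesis
    using prime_ideal_Zring_eigenvalue[OF M y _ _ kernel] by simp
qed

lemma gen_ideal_Zring_contract_iff:
  assumes "L > 0" "y \<in> Zring k"
  shows "y \<in> gen_ideal (Zring L) P \<longleftrightarrow> y \<in> P"
proof
  assume "y \<in> P"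
  moreover have "y = (\<Sum>j<Suc 0. 1 * y)"
    by simp
  ultimately show "y \<in> gen_ideal (Zring L) P"
    unfolding gen_ideal_iff using Zring_1[OF assms(1)]
    by (intro exI[of _ "Suc 0"] exI[of _ "\<lambda>_. 1"] exI[of _ "\<lambda>_. y"]) simp
qed (rule gen_ideal_Zring_contract[OF assms])

end

section \<open>Finite fields with a primitive element\<close>

lemma eta_nonzero: "x \<noteq> 0 \<Longrightarrow> eta \<alpha> N j x = zeta N ^ (j * dlog \<alpha> x)"
  unfolding eta_def zeta_power by (simp add: mult_ac)

lemma rho_nonzero: "x \<noteq> 0 \<Longrightarrow> rho \<alpha> x = (-1) ^ dlog \<alpha> x"
  unfolding rho_def using eta_nonzero[of x \<alpha> 2 1] zeta_two by simp

lemma chi_nonzero: "x \<noteq> 0 \<Longrightarrow> chi \<alpha> w x = w ^ dlog \<alpha> x"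
  unfolding chi_def by simp

locale primitive_element =
  fixes \<alpha> :: "'a::{finite,field}" and T :: nat
  assumes generates: "\<forall>x::'a. x \<noteq> 0 \<longrightarrow> (\<exists>n. \<alpha> ^ n = x)"
    and T_def: "T = CARD('a) - 1"
    and T_even: "even T"
begin

lemma T_ge_2: "T \<ge> 2"
proof -
  have "card {0::'a, 1} \<le> CARD('a)"
    by (rule card_mono) simp_all
  moreover obtain t where "T = 2 * t"
    using T_even by blast
  ultimately show ?thesis
    by (simp add: T_def)
qed

lemma nonzero: "\<alpha> \<noteq> 0"
proof
  assume "\<alpha> = 0"
  have "x = 1" if x: "x \<noteq> 0" for x :: 'a
  proof -
    obtain n where "\<alpha> ^ n = x"
      using generates x by blast
    with \<open>\<alpha> = 0\<close> x show ?thesis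
      by (cases n) simp_all
  qed
  then have "UNIV - {0} \<subseteq> {1::'a}"
    by blast
  then have "card (UNIV - {0::'a}) \<le> card {1::'a}"
    by (rule card_mono[rotated]) simp
  then have "T \<le> 1"
    by (simp add: card_Diff_subset T_def)
  with T_ge_2 show False
    by simp
qed

lemma ex_power_eq_one: "\<exists>d>0. \<alpha> ^ d = 1"
proof -
  have "\<not> inj (\<lambda>n::nat. \<alpha> ^ n)"
    using finite_imageD[of "\<lambda>n::nat. \<alpha> ^ n" UNIV] by auto
  then obtain i j where "i < j" "\<alpha> ^ i = \<alpha> ^ j"
    unfolding inj_def by (metis linorder_neqE_nat)
  then have "\<alpha> ^ (j - i) = 1"
    using nonzero by (simp add: power_diff)
  with \<open>i < j\<close> show ?thesis
    by (intro exI[of _ "j - i"]) simp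
qed

definition mult_order :: nat where
  "mult_order = (LEAST d. 0 < d \<and> \<alpha> ^ d = 1)"

lemma mult_order: "0 < mult_order" "\<alpha> ^ mult_order = 1"
  using LeastI_ex[OF ex_power_eq_one] unfolding mult_order_def by auto

lemma power_diff_eq_one: "s \<le> l \<Longrightarrow> \<alpha> ^ s = \<alpha> ^ l \<Longrightarrow> \<alpha> ^ (l - s) = 1"
  using nonzero by (simp add: power_diff)

lemma power_eq_power_iff_mod_order: "\<alpha> ^ a = \<alpha> ^ b \<longleftrightarrow> a mod mult_order = b mod mult_order"
proof
  have below_order: "\<not> (s < l \<and> l < mult_order \<and> \<alpha> ^ s = \<alpha> ^ l)" for s l
  proof
    assume "s < l \<and> l < mult_order \<and> \<alpha> ^ s = \<alpha> ^ l"
    then have "0 < l - s" "l - s < mult_order" "\<alpha> ^ (l - s) = 1"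
      using power_diff_eq_one by auto
    then show False
      using not_less_Least unfolding mult_order_def by blast
  qed
  assume "\<alpha> ^ a = \<alpha> ^ b"
  then have "\<alpha> ^ (a mod mult_order) = \<alpha> ^ (b mod mult_order)"
    by (simp add: power_mod_eq_of_power_eq_one[OF mult_order(2)])
  then show "a mod mult_order = b mod mult_order"
    using below_order[of "a mod mult_order" "b mod mult_order"]
      below_order[of "b mod mult_order" "a mod mult_order"] mult_order(1)
    by (auto simp: linorder_neq_iff)
qed (metis power_mod_eq_of_power_eq_one[OF mult_order(2)])

lemma power_mod_order: "x \<noteq> 0 \<Longrightarrow> \<exists>n<mult_order. \<alpha> ^ n = x"
proof -
  assume "x \<noteq> 0"
  then obtain n where "\<alpha> ^ n = x"
    using generates by blast
  then show ?thesis
    using mult_order by (intro exI[of _ "n mod mult_order"])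
      (simp add: power_mod_eq_of_power_eq_one)
qed

lemma bij_betw_power_mult_order: "bij_betw (\<lambda>n. \<alpha> ^ n) {..<mult_order} (UNIV - {0})"
  unfolding bij_betw_def
proof
  show "inj_on (\<lambda>n. \<alpha> ^ n) {..<mult_order}"
    by (auto simp: inj_on_def power_eq_power_iff_mod_order)
  show "(\<lambda>n. \<alpha> ^ n) ` {..<mult_order} = UNIV - {0}"
    using nonzero power_mod_order by auto
qed

lemma mult_order_eq_T: "mult_order = T"
  using bij_betw_same_card[OF bij_betw_power_mult_order] by (simp add: T_def)

lemma power_eq_power_iff: "\<alpha> ^ a = \<alpha> ^ b \<longleftrightarrow> a mod T = b mod T"
  using power_eq_power_iff_mod_order by (simp add: mult_order_eq_T)

lemma power_T: "\<alpha> ^ T = 1"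
  using mult_order(2) by (simp add: mult_order_eq_T)

lemma bij_betw_power: "bij_betw (\<lambda>n. \<alpha> ^ n) {..<T} (UNIV - {0})"
  using bij_betw_power_mult_order by (simp add: mult_order_eq_T)

lemma dlog_power: "dlog \<alpha> (\<alpha> ^ n) = n mod T"
  unfolding dlog_def
proof (rule Least_equality)
  show "\<alpha> ^ (n mod T) = \<alpha> ^ n"
    by (simp add: power_eq_power_iff)
  fix m
  assume "\<alpha> ^ m = \<alpha> ^ n"
  then have "n mod T = m mod T"
    by (simp add: power_eq_power_iff)
  then show "n mod T \<le> m"
    by (metis mod_less_eq_dividend)
qed

lemma power_dlog: "x \<noteq> 0 \<Longrightarrow> \<alpha> ^ dlog \<alpha> x = x"
  unfolding dlog_def using generates by (metis (mono_tags) LeastI)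

lemma minus_one_eq_power: "- 1 = \<alpha> ^ (T div 2)"
proof -
  define x where "x = \<alpha> ^ (T div 2)"
  have "x ^ 2 = 1"
    unfolding x_def using power_T T_even by (simp add: power_mult[symmetric])
  then have "(x - 1) * (x + 1) = 0"
    by (simp add: algebra_simps power2_eq_square)
  moreover have "x \<noteq> 1"
    using power_eq_power_iff[of "T div 2" 0] T_ge_2 unfolding x_def by simp
  ultimately show ?thesis
    unfolding x_def by (simp add: neg_eq_iff_add_eq_0 add.commute)
qed

lemma dlog_minus_one: "dlog \<alpha> (-1) = T div 2"
  using dlog_power[of "T div 2"] minus_one_eq_power T_ge_2 by simp

lemma minus_power: "- (\<alpha> ^ n) = \<alpha> ^ (n + T div 2)"
  by (simp add: power_add minus_one_eq_power[symmetric])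

lemma square_iff_even_dlog:
  assumes "x \<noteq> 0"
  shows "(\<exists>y. y ^ 2 = x) \<longleftrightarrow> even (dlog \<alpha> x)"
proof
  assume "\<exists>y. y ^ 2 = x"
  then obtain y where y: "y ^ 2 = x" by blast
  with assms have "y \<noteq> 0"
    by auto
  then obtain m where "\<alpha> ^ m = y"
    using generates by blast
  with y have "x = \<alpha> ^ (2 * m)"
    by (simp add: power_mult mult.commute)
  then have "dlog \<alpha> x = (2 * m) mod T"
    by (simp add: dlog_power)
  then show "even (dlog \<alpha> x)"
    using T_even dvd_mod[of 2 "2 * m" T] by simp
next
  assume "even (dlog \<alpha> x)"
  then obtain d where "dlog \<alpha> x = 2 * d" by blast
  then have "(\<alpha> ^ d) ^ 2 = x"
    using power_dlog[OF assms] by (simp add: power_mult[symmetric] mult.commute)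
  then show "\<exists>y. y ^ 2 = x" by blast
qed

lemma not_slce_half: "\<not> slce \<alpha> (T div 2)"
  by (simp add: slce_def nonsquare_def minus_one_eq_power[symmetric])

lemma rho_one_plus_power:
  assumes "n < T"
  shows "rho \<alpha> (1 + \<alpha> ^ n) = (if n = T div 2 then 0 else if slce \<alpha> n then -1 else 1)"
proof (cases "n = T div 2")
  case True
  then show ?thesis
    by (simp add: minus_one_eq_power[symmetric] rho_def eta_def)
next
  case False
  have "\<alpha> ^ n \<noteq> \<alpha> ^ (T div 2)"
    using False assms T_ge_2 by (simp add: power_eq_power_iff)
  then have nz: "1 + \<alpha> ^ n \<noteq> 0"
    by (simp add: minus_one_eq_power[symmetric] add_eq_0_iff)
  then have "slce \<alpha> n \<longleftrightarrow> odd (dlog \<alpha> (1 + \<alpha> ^ n))"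
    using square_iff_even_dlog unfolding slce_def nonsquare_def by (simp add: add.commute)
  then show ?thesis
    using False by (simp add: rho_nonzero[OF nz] minus_one_power_iff)
qed

lemma Ksum_eq_sum_powers:
  assumes "\<psi> 0 = 0"
  shows "Ksum \<alpha> \<psi> = (\<Sum>n<T. rho \<alpha> (1 + \<alpha> ^ n) * \<psi> (- (\<alpha> ^ n)))"
proof -
  have "bij_betw (\<lambda>x. 1 + x) (UNIV - {0::'a}) (UNIV - {1})"
    by (rule bij_betw_byWitness[where f' = "\<lambda>x. x - 1"]) auto
  then have "bij_betw ((\<lambda>x. 1 + x) \<circ> (\<lambda>n. \<alpha> ^ n)) {..<T} (UNIV - {1})"
    by (rule bij_betw_trans[OF bij_betw_power])
  then have shift: "bij_betw (\<lambda>n. 1 + \<alpha> ^ n) {..<T} (UNIV - {1})"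
    unfolding comp_def .
  have "Ksum \<alpha> \<psi> = (\<Sum>x\<in>insert 1 (UNIV - {1}). rho \<alpha> x * \<psi> (1 - x))"
    unfolding Ksum_def by (simp add: insert_Diff)
  also have "\<dots> = (\<Sum>x\<in>UNIV - {1}. rho \<alpha> x * \<psi> (1 - x))"
    using assms by (subst sum.insert) auto
  also have "\<dots> = (\<Sum>n<T. rho \<alpha> (1 + \<alpha> ^ n) * \<psi> (1 - (1 + \<alpha> ^ n)))"
    by (rule sum.reindex_bij_betw[OF shift, symmetric])
  finally show ?thesis
    by simp
qed

end

section \<open>Residue sums and the character sums \<open>K\<close>\<close>

definition residue_sum :: "(nat \<Rightarrow> bool) \<Rightarrow> nat \<Rightarrow> nat \<Rightarrow> nat \<Rightarrow> 'a::comm_semiring_1 \<Rightarrow> 'a" where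
  "residue_sum s T N i x = (\<Sum>n<T. if n mod N = i \<and> s n then x ^ n else 0)"

lemma residue_sum_in_Zring: "k > 0 \<Longrightarrow> x \<in> Zring k \<Longrightarrow> residue_sum s T N i x \<in> Zring k"
  unfolding residue_sum_def by (auto intro!: Zring_sum Zring_power Zring_0)

text \<open>Here \<open>z\<close> plays the role of \<open>\<chi>(\<alpha>)\<close>; the hypothesis on \<open>z ^ (T div 2)\<close> says \<open>\<chi>(-1) = 1\<close>.\<close>
locale twisted_Ksum = primitive_element +
  fixes N :: nat and z :: complex
  assumes N_pos: "N > 0" and N_dvd_T: "N dvd T"
    and z_power_half: "z ^ (T div 2) = 1"
    and zeta_power_times_z: "\<And>j. zeta N ^ j * z \<noteq> 1"
begin

lemma zeta_power_power_T: "(zeta N ^ j) ^ T = 1"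
proof -
  obtain c where "T = N * c"
    using N_dvd_T by blast
  then have "(zeta N ^ j) ^ T = ((zeta N ^ N) ^ c) ^ j"
    by (simp add: power_mult[symmetric] mult_ac)
  then show ?thesis
    by (simp add: zeta_power_self[OF N_pos])
qed

lemma z_power_T: "z ^ T = 1"
  using z_power_half T_even by (metis dvd_mult_div_cancel mult_2 power_add power_one)

lemma eta_times_Ksum_eq:
  "eta \<alpha> N j (-1) * Ksum \<alpha> (\<lambda>x. eta \<alpha> N j x * chi \<alpha> z x)
     = (\<Sum>n<T. rho \<alpha> (1 + \<alpha> ^ n) * (zeta N ^ j) ^ n * z ^ n)"
proof -
  let ?w = "zeta N ^ j"
  have term_eq: "eta \<alpha> N j (- (\<alpha> ^ n)) * chi \<alpha> z (- (\<alpha> ^ n)) = ?w ^ (n + T div 2) * z ^ n" for n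
  proof -
    have nz: "- (\<alpha> ^ n) \<noteq> 0"
      using nonzero by simp
    have dlog: "dlog \<alpha> (- (\<alpha> ^ n)) = (n + T div 2) mod T"
      by (simp add: minus_power dlog_power)
    have "eta \<alpha> N j (- (\<alpha> ^ n)) = ?w ^ ((n + T div 2) mod T)"
      by (simp add: eta_nonzero[OF nz] dlog power_mult)
    also have "\<dots> = ?w ^ (n + T div 2)"
      by (rule power_mod_eq_of_power_eq_one[OF zeta_power_power_T])
    finally have eta: "eta \<alpha> N j (- (\<alpha> ^ n)) = ?w ^ (n + T div 2)" .
    have "chi \<alpha> z (- (\<alpha> ^ n)) = z ^ ((n + T div 2) mod T)"
      by (simp add: chi_nonzero[OF nz] dlog)
    also have "\<dots> = z ^ (n + T div 2)"
      by (rule power_mod_eq_of_power_eq_one[OF z_power_T])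
    also have "\<dots> = z ^ n"
      by (simp add: power_add z_power_half)
    finally show ?thesis
      by (simp add: eta)
  qed
  have half: "?w ^ (T div 2) * (r * (?w ^ (n + T div 2) * x)) = r * ?w ^ n * x" for n r x
  proof -
    have T: "T div 2 + (n + T div 2) = n + T"
      using T_even by auto
    have "?w ^ (T div 2) * (r * (?w ^ (n + T div 2) * x)) = r * ?w ^ (T div 2 + (n + T div 2)) * x"
      by (simp only: power_add mult_ac)
    then show ?thesis
      unfolding T by (simp add: power_add zeta_power_power_T)
  qed
  have "Ksum \<alpha> (\<lambda>x. eta \<alpha> N j x * chi \<alpha> z x)
      = (\<Sum>n<T. rho \<alpha> (1 + \<alpha> ^ n) * (eta \<alpha> N j (- (\<alpha> ^ n)) * chi \<alpha> z (- (\<alpha> ^ n))))"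
    by (rule Ksum_eq_sum_powers) (simp add: eta_def)
  moreover have "eta \<alpha> N j (-1) = ?w ^ (T div 2)"
    by (simp add: eta_nonzero dlog_minus_one power_mult)
  ultimately show ?thesis
    by (simp add: term_eq sum_distrib_left half)
qed

lemma inverse_dft_eta_Ksum:
  assumes "i < N"
  shows "(\<Sum>j<N. inverse (zeta N) ^ (i * j) * eta \<alpha> N j (-1) * Ksum \<alpha> (\<lambda>x. eta \<alpha> N j x * chi \<alpha> z x))
    = of_nat N * (\<Sum>n<T. if n mod N = i then rho \<alpha> (1 + \<alpha> ^ n) * z ^ n else 0)"
proof -
  have powers: "inverse (zeta N) ^ (i * j) * (zeta N ^ j) ^ n = (inverse (zeta N) ^ i * zeta N ^ n) ^ j"
    for j n
    by (simp add: power_mult_distrib power_mult[symmetric] mult.commute)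
  have "(\<Sum>j<N. inverse (zeta N) ^ (i * j) * eta \<alpha> N j (-1) * Ksum \<alpha> (\<lambda>x. eta \<alpha> N j x * chi \<alpha> z x))
      = (\<Sum>j<N. inverse (zeta N) ^ (i * j) * (\<Sum>n<T. rho \<alpha> (1 + \<alpha> ^ n) * (zeta N ^ j) ^ n * z ^ n))"
    by (simp add: mult.assoc eta_times_Ksum_eq)
  also have "\<dots> = (\<Sum>j<N. \<Sum>n<T. rho \<alpha> (1 + \<alpha> ^ n) * z ^ n * (inverse (zeta N) ^ (i * j) * (zeta N ^ j) ^ n))"
    by (simp add: sum_distrib_left mult_ac)
  also have "\<dots> = (\<Sum>n<T. rho \<alpha> (1 + \<alpha> ^ n) * z ^ n * (\<Sum>j<N. (inverse (zeta N) ^ i * zeta N ^ n) ^ j))"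
    by (subst sum.swap) (simp add: sum_distrib_left powers)
  also have "\<dots> = (\<Sum>n<T. rho \<alpha> (1 + \<alpha> ^ n) * z ^ n * (if n mod N = i then of_nat N else 0))"
    by (simp only: zeta_orthogonality[OF N_pos assms])
  also have "\<dots> = of_nat N * (\<Sum>n<T. if n mod N = i then rho \<alpha> (1 + \<alpha> ^ n) * z ^ n else 0)"
    by (simp add: sum_distrib_left if_distrib mult_ac cong: if_cong)
  finally show ?thesis .
qed

lemma residue_sum_all_eq_zero:
  assumes "i < N"
  shows "residue_sum (\<lambda>_. True) T N i z = 0"
proof -
  have powers: "z ^ n * (inverse (zeta N) ^ i * zeta N ^ n) ^ j = inverse (zeta N) ^ (i * j) * (zeta N ^ j * z) ^ n"
    for j n
    by (simp add: power_mult_distrib power_mult[symmetric] mult.commute)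
  have "of_nat N * residue_sum (\<lambda>_. True) T N i z
      = (\<Sum>n<T. z ^ n * (if n mod N = i then of_nat N else 0))"
    by (simp add: residue_sum_def sum_distrib_left if_distrib mult_ac cong: if_cong)
  also have "\<dots> = (\<Sum>n<T. z ^ n * (\<Sum>j<N. (inverse (zeta N) ^ i * zeta N ^ n) ^ j))"
    by (simp only: zeta_orthogonality[OF N_pos assms])
  also have "\<dots> = (\<Sum>j<N. inverse (zeta N) ^ (i * j) * (\<Sum>n<T. (zeta N ^ j * z) ^ n))"
    by (simp add: sum_distrib_left powers) (rule sum.swap)
  also have "\<dots> = 0"
  proof -
    have "(\<Sum>n<T. (zeta N ^ j * z) ^ n) = 0" for j
    proof -
      have "(zeta N ^ j * z) ^ T = 1"
        by (simp add: power_mult_distrib zeta_power_power_T z_power_T)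
      then show ?thesis
        by (subst sum_powers_root_of_unity) (simp_all add: zeta_power_times_z)
    qed
    then show ?thesis
      by simp
  qed
  finally show ?thesis
    using N_pos by simp
qed

lemma dft_eta_Ksum_eq_residue_sum:
  assumes "i < N"
  shows "(\<Sum>j<N. inverse (zeta N) ^ (i * j) * eta \<alpha> N j (-1) * Ksum \<alpha> (\<lambda>x. eta \<alpha> N j x * chi \<alpha> z x))
       - (- (of_nat N * (if (T div 2) mod N = i then 1 else 0)))
     = - (2 * of_nat N) * residue_sum (slce \<alpha>) T N i z"
proof -
  have summand: "(if n mod N = i then rho \<alpha> (1 + \<alpha> ^ n) * z ^ n else 0)
      = (if n mod N = i then z ^ n else 0) - 2 * (if n mod N = i \<and> slce \<alpha> n then z ^ n else 0)
        - (if n = T div 2 \<and> (T div 2) mod N = i then 1 else 0)" if "n < T" for n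
    using that by (simp add: rho_one_plus_power z_power_half not_slce_half)
  have "(\<Sum>n<T. if n = T div 2 \<and> (T div 2) mod N = i then 1 else 0)
      = (if (T div 2) mod N = i then 1 else (0::complex))"
    using T_ge_2 by (simp add: sum.delta' if_distrib cong: if_cong)
  then have rho_sum: "(\<Sum>n<T. if n mod N = i then rho \<alpha> (1 + \<alpha> ^ n) * z ^ n else 0)
      = residue_sum (\<lambda>_. True) T N i z - 2 * residue_sum (slce \<alpha>) T N i z
        - (if (T div 2) mod N = i then 1 else 0)"
    by (simp add: summand residue_sum_def sum_subtractf sum_distrib_left)
  show ?thesis
    unfolding inverse_dft_eta_Ksum[OF assms] rho_sum residue_sum_all_eq_zero[OF assms]
    by (simp add: algebra_simps)
qed

end

section \<open>Polynomials in characteristic two\<close>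

lemma two_eq_zero_char2: "CHAR('a::comm_semiring_1) = 2 \<Longrightarrow> (2::'a) = 0"
  using of_nat_eq_0_iff_char_dvd[of 2, where 'a='a] by simp

lemma linear_power_two_power_char2:
  fixes \<beta> :: "'a::field"
  assumes "CHAR('a) = 2"
  shows "[:-\<beta>, 1:] ^ (2 ^ h) = monom 1 (2 ^ h) - [:\<beta> ^ (2 ^ h):]"
proof (induction h)
  case 0
  show ?case
    by (simp add: poly_eq_iff coeff_monom coeff_pCons')
next
  case (Suc h)
  have "(2 :: 'a poly) = 0"
    using two_eq_zero_char2[OF assms] by (simp add: numeral_poly)
  then have square: "(p - q) ^ 2 = p ^ 2 - q ^ 2" for p q :: "'a poly"
    by (simp add: power2_eq_square algebra_simps mult_2[symmetric])
  have "[:-\<beta>, 1:] ^ (2 ^ Suc h) = ([:-\<beta>, 1:] ^ (2 ^ h)) ^ 2"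
    by (simp add: power_mult[symmetric] mult.commute)
  also have "\<dots> = monom 1 (2 ^ Suc h) - [:\<beta> ^ (2 ^ Suc h):]"
    by (simp add: Suc square monom_power poly_const_pow power_mult[symmetric] mult.commute)
  finally show ?case .
qed

lemma monom_minus_const_dvd:
  fixes c :: "'a::comm_ring_1"
  shows "(monom 1 N - [:c:]) dvd (monom 1 n - monom (c ^ (n div N)) (n mod N))"
proof -
  have "monom (1::'a) n = monom 1 (n mod N) * (monom 1 N) ^ (n div N)"
    by (simp add: monom_power mult_monom)
  moreover have "monom (c ^ (n div N)) (n mod N) = monom 1 (n mod N) * [:c:] ^ (n div N)"
    by (simp add: monom_altdef poly_const_pow)
  ultimately have "monom 1 n - monom (c ^ (n div N)) (n mod N)
      = monom 1 (n mod N) * ((monom 1 N) ^ (n div N) - [:c:] ^ (n div N))"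
    by (simp add: algebra_simps)
  also have "(monom 1 N) ^ (n div N) - [:c:] ^ (n div N)
      = (monom 1 N - [:c:]) * (\<Sum>i<n div N. [:c:] ^ (n div N - Suc i) * (monom 1 N) ^ i)"
    by (rule power_diff_sumr2)
  finally have factored: "monom 1 n - monom (c ^ (n div N)) (n mod N)
      = monom 1 (n mod N) * ((monom 1 N - [:c:]) * (\<Sum>i<n div N. [:c:] ^ (n div N - Suc i) * (monom 1 N) ^ i))" .
  show ?thesis
    unfolding factored by (intro dvd_mult dvd_triv_left)
qed

lemma monom_minus_const_dvd_iff_reduction_eq_0:
  fixes c :: "'a::field"
  assumes N: "N > 0"
  shows "(monom 1 N - [:c:]) dvd (\<Sum>n<T. if s n then monom 1 n else 0)
    \<longleftrightarrow> (\<Sum>n<T. if s n then monom (c ^ (n div N)) (n mod N) else 0) = 0"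
    (is "?D dvd ?S \<longleftrightarrow> ?R = 0")
proof -
  have "?D dvd ?S - ?R"
    unfolding sum_subtractf[symmetric] by (rule dvd_sum) (auto intro: monom_minus_const_dvd)
  then have "?D dvd ?S \<longleftrightarrow> ?D dvd ?R"
    using dvd_add_right_iff[of ?D "?S - ?R" ?R] by simp
  also have "\<dots> \<longleftrightarrow> ?R = 0"
  proof
    have "coeff ?D N = 1"
      using N by (cases N) simp_all
    then have "N \<le> degree ?D"
      by (intro le_degree) simp
    moreover have "degree ?R < N"
      using N by (intro degree_sum_less) (auto intro: le_less_trans[OF degree_monom_le])
    ultimately show "?D dvd ?R \<Longrightarrow> ?R = 0"
      using dvd_imp_degree_le[of ?D ?R] by linarith
  qed simp
  finally show ?thesis .
qed

text \<open>Reducing \<open>S(X)\<close> modulo \<open>X\<^sup>N - \<beta>\<^sup>N\<close> leaves the polynomial whose \<open>i\<close>-th coefficient is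
  \<open>\<beta>\<^sup>-\<^sup>i\<close> times the \<open>i\<close>-th residue sum.\<close>
lemma monom_minus_power_dvd_iff_residue_sums:
  fixes \<beta> :: "'a::field" and s :: "nat \<Rightarrow> bool"
  assumes N: "N > 0" and \<beta>: "\<beta> \<noteq> 0"
  shows "(monom 1 N - [:\<beta> ^ N:]) dvd (\<Sum>n<T. if s n then monom 1 n else 0)
     \<longleftrightarrow> (\<forall>i<N. residue_sum s T N i \<beta> = 0)"
proof -
  define R :: "'a poly" where "R = (\<Sum>n<T. if s n then monom ((\<beta> ^ N) ^ (n div N)) (n mod N) else 0)"
  have coeff_R: "coeff R i = (\<Sum>n<T. if n mod N = i \<and> s n then (\<beta> ^ N) ^ (n div N) else 0)" for i
    unfolding R_def coeff_sum by (auto intro!: sum.cong simp: coeff_monom)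
  have high: "coeff R i = 0" if "N \<le> i" for i
  proof -
    have "n mod N \<noteq> i" for n
      using that mod_less_divisor[OF N, of n] by linarith
    then show ?thesis
      by (simp add: coeff_R)
  qed
  have scaled: "\<beta> ^ i * coeff R i = residue_sum s T N i \<beta>" for i
  proof -
    have "\<beta> ^ i * (if n mod N = i \<and> s n then (\<beta> ^ N) ^ (n div N) else 0)
        = (if n mod N = i \<and> s n then \<beta> ^ n else 0)" for n
    proof -
      have "\<beta> ^ n = \<beta> ^ (n mod N + N * (n div N))"
        by simp
      also have "\<dots> = \<beta> ^ (n mod N) * (\<beta> ^ N) ^ (n div N)"
        by (simp only: power_add power_mult)
      finally show ?thesis
        by simp
    qed
    then show ?thesis
      by (simp add: coeff_R residue_sum_def sum_distrib_left)
  qed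
  have "R = 0 \<longleftrightarrow> (\<forall>i<N. coeff R i = 0)"
  proof
    assume low: "\<forall>i<N. coeff R i = 0"
    show "R = 0"
    proof (rule poly_eqI)
      show "coeff R i = coeff 0 i" for i
        using high[of i] low by (cases "i < N") auto
    qed
  qed simp
  also have "\<dots> \<longleftrightarrow> (\<forall>i<N. residue_sum s T N i \<beta> = 0)"
    using \<beta> by (simp add: scaled[symmetric])
  finally show ?thesis
    unfolding monom_minus_const_dvd_iff_reduction_eq_0[OF N] R_def .
qed

lemma Spoly_dvd_iff_residue_sums:
  fixes \<alpha> :: "'a::field" and \<beta> :: "'b::field"
  assumes "CHAR('b) = 2" "\<beta> \<noteq> 0"
  shows "[:-\<beta>, 1:] ^ (2 ^ h) dvd (Spoly \<alpha> T :: 'b poly)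
    \<longleftrightarrow> (\<forall>i<2 ^ h. residue_sum (slce \<alpha>) T (2 ^ h) i \<beta> = 0)"
  unfolding linear_power_two_power_char2[OF assms(1)] Spoly_def
  by (rule monom_minus_power_dvd_iff_residue_sums) (simp_all add: assms(2))

lemma power_order_odd_char2:
  fixes \<beta> :: "'a::field"
  assumes "CHAR('a) = 2" "\<beta> ^ k = 1" "\<forall>j. 0 < j \<and> j < k \<longrightarrow> \<beta> ^ j \<noteq> 1" "k > 1"
  shows "odd k"
proof
  assume "even k"
  then obtain l where l: "k = 2 * l" ..
  have "(\<beta> ^ l - 1) ^ 2 = (\<beta> ^ l) ^ 2 + 1 - 2 * \<beta> ^ l"
    by (simp add: power2_eq_square algebra_simps)
  also have "\<dots> = 0"
    using assms(2) two_eq_zero_char2[OF assms(1)] l by (simp add: power_mult[symmetric] mult.commute)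
  finally have "\<beta> ^ l = 1"
    by simp
  moreover have "0 < l" "l < k"
    using l assms(4) by auto
  ultimately show False
    using assms(3) by blast
qed

section \<open>Reduction modulo \<open>\<P>\<close>\<close>

text \<open>\<open>\<theta>\<close> is the reduction \<open>\<int>[\<zeta>\<^sub>k] \<rightarrow> \<int>[\<zeta>\<^sub>k]/\<P> \<cong> \<bbbF>\<^sub>2(\<beta>)\<close> followed by the inclusion into \<open>'b\<close>;
  its values outside \<open>\<int>[\<zeta>\<^sub>k]\<close> are irrelevant.\<close>
locale reduction_map =
  fixes k :: nat and P :: "complex set" and \<theta> :: "complex \<Rightarrow> 'b::field"
  assumes k_pos: "k > 0" and prime: "prime_ideal_Zring k P"
    and additive: "\<forall>x\<in>Zring k. \<forall>y\<in>Zring k. \<theta> (x + y) = \<theta> x + \<theta> y"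
    and multiplicative: "\<forall>x\<in>Zring k. \<forall>y\<in>Zring k. \<theta> (x * y) = \<theta> x * \<theta> y"
    and reduction_one: "\<theta> 1 = 1"
    and kernel: "\<forall>x\<in>Zring k. \<theta> x = 0 \<longleftrightarrow> x \<in> P"
begin

lemma reduction_zero: "\<theta> 0 = 0"
  using additive Zring_0[OF k_pos] by force

lemma reduction_sum: "(\<And>i. i \<in> A \<Longrightarrow> f i \<in> Zring k) \<Longrightarrow> \<theta> (sum f A) = (\<Sum>i\<in>A. \<theta> (f i))"
proof (induction A rule: infinite_finite_induct)
  case (insert a A)
  then show ?case
    using additive Zring_sum[OF k_pos, of A f] by simp
qed (simp_all add: reduction_zero)

lemma reduction_power: "x \<in> Zring k \<Longrightarrow> \<theta> (x ^ n) = \<theta> x ^ n"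
  by (induction n) (simp_all add: reduction_one multiplicative Zring_power[OF k_pos])

lemma residue_sum_mem_iff:
  assumes "x \<in> Zring k"
  shows "residue_sum s T N i x \<in> P \<longleftrightarrow> residue_sum s T N i (\<theta> x) = 0"
proof -
  have "\<theta> (if n mod N = i \<and> s n then x ^ n else 0) = (if n mod N = i \<and> s n then \<theta> x ^ n else 0)" for n
    using assms by (simp add: reduction_power reduction_zero)
  then have reduced: "\<theta> (residue_sum s T N i x) = residue_sum s T N i (\<theta> x)"
    unfolding residue_sum_def using assms
    by (subst reduction_sum) (auto intro: Zring_power[OF k_pos] Zring_0[OF k_pos])
  show ?thesis
    unfolding reduced[symmetric] using kernel residue_sum_in_Zring[OF k_pos assms] by blast
qed

lemma twisted_Ksum_of_lift:
  fixes \<alpha> :: "'a::{finite,field}"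
  assumes "primitive_element \<alpha> T" "CHAR('b) = 2" "\<beta> ^ T = 1"
    and "k > 1" "\<beta> ^ k = 1" "\<forall>j. 0 < j \<and> j < k \<longrightarrow> \<beta> ^ j \<noteq> 1"
    and "z ^ k = 1" "\<theta> z = \<beta>" "2 ^ h dvd T"
  shows "twisted_Ksum \<alpha> T (2 ^ h) z"
proof -
  have "odd k"
    by (rule power_order_odd_char2[OF assms(2,5,6,4)])
  have "k dvd T"
    using power_order_dvd[of k \<beta> T] assms(3-6) by simp
  then have "k dvd T div 2 * 2"
    using primitive_element.T_even[OF assms(1)] by simp
  then have "k dvd T div 2"
    using coprime_dvd_mult_left_iff[of k 2 "T div 2"] \<open>odd k\<close> by simp
  moreover have "z \<noteq> 1"
    using assms(4,6,8) reduction_one by auto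
  then have "zeta (2 ^ h) ^ j * z \<noteq> 1" for j
    using assms(7) \<open>odd k\<close> zeta_power_times_odd_root_ne_one by blast
  ultimately show ?thesis
    using assms(1,7,9)
    by (intro twisted_Ksum.intro twisted_Ksum_axioms.intro) (auto simp: power_mult elim!: dvdE)
qed

end

context twisted_Ksum
begin

lemma dft_eta_Ksum_mem_gen_ideal_iff:
  assumes "k > 0" "prime_ideal_Zring k P" "z \<in> Zring k" "i < N"
  shows "(\<Sum>j<N. inverse (zeta N) ^ (i * j) * eta \<alpha> N j (-1) * Ksum \<alpha> (\<lambda>x. eta \<alpha> N j x * chi \<alpha> z x))
       - (- (of_nat N * (if (T div 2) mod N = i then 1 else 0)))
     \<in> gen_ideal (Zring (N * k)) ((\<lambda>x. (2 * of_nat N) * x) ` P)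
    \<longleftrightarrow> residue_sum (slce \<alpha>) T N i z \<in> P"
proof -
  let ?A = "residue_sum (slce \<alpha>) T N i z"
  let ?I = "gen_ideal (Zring (N * k)) ((\<lambda>x. (2 * of_nat N) * x) ` P)"
  have "(\<Sum>j<N. inverse (zeta N) ^ (i * j) * eta \<alpha> N j (-1) * Ksum \<alpha> (\<lambda>x. eta \<alpha> N j x * chi \<alpha> z x))
       - (- (of_nat N * (if (T div 2) mod N = i then 1 else 0))) \<in> ?I
      \<longleftrightarrow> (2 * of_nat N) * (- ?A) \<in> ?I"
    by (subst dft_eta_Ksum_eq_residue_sum[OF assms(4)]) simp
  also have "\<dots> \<longleftrightarrow> - ?A \<in> gen_ideal (Zring (N * k)) P"
    by (rule gen_ideal_scaled_iff) (use N_pos in simp)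
  also have "\<dots> \<longleftrightarrow> - ?A \<in> P"
    using assms(1,3) N_pos
    by (intro gen_ideal_Zring_contract_iff[OF assms(1,2)] Zring_uminus residue_sum_in_Zring) simp_all
  also have "\<dots> \<longleftrightarrow> ?A \<in> P"
    by (rule prime_ideal_Zring_uminus_iff[OF assms(1,2)])
  finally show ?thesis .
qed

end

theorem mainTheorem6:
  fixes p m u T' h k :: nat
    and \<alpha> :: "'a::{finite,field}"
    and \<beta> :: "'b::field"
    and P :: "complex set"
    and \<theta> :: "complex \<Rightarrow> 'b"
    and z :: complex
  assumes "prime p" and "odd p" and "m \<ge> 1" and "CARD('a) = p ^ m"
    and "\<forall>x::'a. x \<noteq> 0 \<longrightarrow> (\<exists>n. \<alpha> ^ n = x)"
    and "CARD('a) - 1 = 2 ^ u * T'" and "u \<ge> 1" and "odd T'"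
    and "CHAR('b) = 2"
    and "\<beta> ^ (CARD('a) - 1) = 1"
    and "k > 1" and "\<beta> ^ k = 1" and "\<forall>j. 0 < j \<and> j < k \<longrightarrow> \<beta> ^ j \<noteq> 1"
    and "prime_ideal_Zring k P" and "2 \<in> P"
    and "\<forall>x\<in>Zring k. \<forall>y\<in>Zring k. \<theta> (x + y) = \<theta> x + \<theta> y"
    and "\<forall>x\<in>Zring k. \<forall>y\<in>Zring k. \<theta> (x * y) = \<theta> x * \<theta> y"
    and "\<theta> 1 = 1"
    and "\<forall>x\<in>Zring k. \<theta> x = 0 \<longleftrightarrow> x \<in> P"
    and "z ^ k = 1" and "\<theta> z = \<beta>"
    and "1 \<le> h" and "h \<le> u"
  shows "([:-\<beta>, 1:] ^ (2 ^ h) dvd (Spoly \<alpha> (CARD('a) - 1) :: 'b poly)) \<longleftrightarrow>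
    (\<forall>i < 2 ^ h.
       (\<Sum>j < 2 ^ h. inverse (zeta (2 ^ h)) ^ (i * j) * eta \<alpha> (2 ^ h) j (-1)
            * Ksum \<alpha> (\<lambda>x. eta \<alpha> (2 ^ h) j x * chi \<alpha> z x))
       - (- (2 ^ h * (if ((CARD('a) - 1) div 2) mod 2 ^ h = i then 1 else 0)))
       \<in> gen_ideal (Zring (2 ^ h * k)) ((\<lambda>x. 2 ^ (h + 1) * x) ` P))"
proof -
  define T where "T = CARD('a) - 1"
  have "even T" "2 ^ h dvd T"
    using assms(6,7,23) by (auto simp: T_def le_imp_power_dvd)
  have field: "primitive_element \<alpha> T"
    using assms(5) \<open>even T\<close> by unfold_locales (simp_all add: T_def)
  interpret reduction_map k P \<theta>
    using assms(11,14,16-19) by unfold_locales auto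
  interpret twisted_Ksum \<alpha> T "2 ^ h" z
    using assms(9-13,20,21) \<open>2 ^ h dvd T\<close> by (intro twisted_Ksum_of_lift[OF field]) (simp_all add: T_def)
  have "\<beta> \<noteq> 0"
    using assms(11,12) by (auto simp: power_0_left)
  have "z \<in> Zring k"
    using assms(11,20) by (intro root_of_unity_in_Zring) simp_all
  have "[:-\<beta>, 1:] ^ (2 ^ h) dvd (Spoly \<alpha> T :: 'b poly)
      \<longleftrightarrow> (\<forall>i<2 ^ h. residue_sum (slce \<alpha>) T (2 ^ h) i \<beta> = 0)"
    by (rule Spoly_dvd_iff_residue_sums[OF assms(9) \<open>\<beta> \<noteq> 0\<close>])
  also have "\<dots> \<longleftrightarrow> (\<forall>i<2 ^ h. residue_sum (slce \<alpha>) T (2 ^ h) i z \<in> P)"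
    using residue_sum_mem_iff[OF \<open>z \<in> Zring k\<close>] assms(21) by simp
  also have "\<dots> \<longleftrightarrow> (\<forall>i < 2 ^ h.
       (\<Sum>j < 2 ^ h. inverse (zeta (2 ^ h)) ^ (i * j) * eta \<alpha> (2 ^ h) j (-1)
            * Ksum \<alpha> (\<lambda>x. eta \<alpha> (2 ^ h) j x * chi \<alpha> z x))
       - (- (2 ^ h * (if (T div 2) mod 2 ^ h = i then 1 else 0)))
       \<in> gen_ideal (Zring (2 ^ h * k)) ((\<lambda>x. 2 ^ (h + 1) * x) ` P))"
    using dft_eta_Ksum_mem_gen_ideal_iff[OF k_pos prime \<open>z \<in> Zring k\<close>] by simp
  finally show ?thesis
    by (simp add: T_def)
qed

end
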